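(* Let $\Sigma=\{1,\square,h,s,t\}$ and let $Z$ be the string rewriting system over $\Sigma$ with the seven rules $h11\to 1h$, $11h\square \to 11s\square$, $1s\to s1$, $\square s\to \square h$, $h1\square \to t11\square$, $1t\to t111$, $\square t\to\square h$. There is no dimension $d\geq 1$ and no family of affine maps $[\sigma](x)=M_\sigma x+v_\sigma$ ($\sigma\in\Sigma$, $M_\sigma\in\mathbb{N}^{d\times d}$, $v_\sigma\in\mathbb{N}^d$) such that every $[\sigma]$ is strictly monotone with respect to $>$ (i.e. $x>y$ implies $[\sigma](x)>[\sigma](y)$), for at least one rule $\ell\to r$ of $Z$ we have $[\ell](x)>[r](x)$ for all $x\in\mathbb{N}^d$, and for every remaining rule $\ell'\to r'$ of $Z$ we have $[\ell'](x)\gtrsim[r'](x)$ for all $x\in\mathbb{N}^d$.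
   Context: Strings are finite words over $\Sigma$; the interpretation is extended to strings by $[s_1 s_2\cdots s_n]=[s_1]\circ[s_2]\circ\cdots\circ[s_n]$ (the empty string being the identity). On $\mathbb{N}^d$: $x>y$ iff $x_1>y_1$ and $x_i\geq y_i$ for all $i\in\{2,\dots,d\}$; $x\gtrsim y$ iff $x_i\geq y_i$ for all $i$. *)

theory Defs
  imports Main
begin

datatype sym = One | Box | H | S | T

text \<open>Vectors in N^d are represented as functions nat => nat, only indices < d matter.
  Index 0 plays the role of the first coordinate x_1.\<close>

definition gtv :: "nat \<Rightarrow> (nat \<Rightarrow> nat) \<Rightarrow> (nat \<Rightarrow> nat) \<Rightarrow> bool" where
  "gtv d x y \<longleftrightarrow> x 0 > y 0 \<and> (\<forall>i. 1 \<le> i \<and> i < d \<longrightarrow> x i \<ge> y i)"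

definition gev :: "nat \<Rightarrow> (nat \<Rightarrow> nat) \<Rightarrow> (nat \<Rightarrow> nat) \<Rightarrow> bool" where
  "gev d x y \<longleftrightarrow> (\<forall>i<d. x i \<ge> y i)"

definition aff :: "nat \<Rightarrow> (nat \<Rightarrow> nat \<Rightarrow> nat) \<Rightarrow> (nat \<Rightarrow> nat) \<Rightarrow> (nat \<Rightarrow> nat) \<Rightarrow> (nat \<Rightarrow> nat)" where
  "aff d M v x = (\<lambda>i. if i < d then (\<Sum>j<d. M i j * x j) + v i else 0)"

definition interp :: "nat \<Rightarrow> (sym \<Rightarrow> nat \<Rightarrow> nat \<Rightarrow> nat) \<Rightarrow> (sym \<Rightarrow> nat \<Rightarrow> nat)
    \<Rightarrow> sym list \<Rightarrow> (nat \<Rightarrow> nat) \<Rightarrow> (nat \<Rightarrow> nat)" where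
  "interp d M v w = foldr (\<lambda>\<sigma> f. aff d (M \<sigma>) (v \<sigma>) \<circ> f) w id"

definition Z :: "(sym list \<times> sym list) list" where
  "Z = [ ([H, One, One], [One, H]),
         ([One, One, H, Box], [One, One, S, Box]),
         ([One, S], [S, One]),
         ([Box, S], [Box, H]),
         ([H, One, Box], [T, One, One, Box]),
         ([One, T], [T, One, One, One]),
         ([Box, T], [Box, H]) ]"

end

theory Submission
  imports Defs Complex_Main
begin

(* Write W n for the word \<box>h1\<^sup>n\<box>. The rules 1-4 rewrite W (2k) to W k for k \<ge> 2 (h halves
   the block of ones on its way right, s walks back), and the rules 1, 5, 6, 7 rewrite W (2k+1)
   to W (3k+2) for k \<ge> 1 (t triples the ones on its way back). Hence the derivation
   W (8j+6) \<rightarrow> W (4j+3) \<rightarrow> W (6j+5) \<rightarrow> W (9j+8) uses every rule of Z, and any interpretation as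
   in the statement strictly decreases along it. On the other hand the iterates of the affine
   map [1] have natural coefficients, so by Dickson's lemma two of them, n\<^sub>0 < n\<^sub>0 + p, are
   coefficientwise ordered; then [1^(n+kp)] \<gtrsim> [1^n] for all n \<ge> n\<^sub>0, and choosing j + 2 a large
   multiple of p gives [W (9j+8)] \<gtrsim> [W (8j+6)], contradicting the strict decrease in the first
   coordinate. *)

lemma interp_Nil [simp]: "interp d M v [] = id"
  by (simp add: interp_def)

lemma interp_Cons [simp]: "interp d M v (\<sigma> # w) = aff d (M \<sigma>) (v \<sigma>) \<circ> interp d M v w"
  by (simp add: interp_def)

lemma interp_append: "interp d M v (u @ w) = interp d M v u \<circ> interp d M v w"
  by (induction u) auto

lemma interp_replicate: "interp d M v (replicate n \<sigma>) = aff d (M \<sigma>) (v \<sigma>) ^^ n"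
  by (induction n) auto

lemma gev_refl: "gev d x x"
  by (simp add: gev_def)

lemma gev_trans: "gev d x y \<Longrightarrow> gev d y z \<Longrightarrow> gev d x z"
  unfolding gev_def using le_trans by blast

lemma gtv_imp_gev: "gtv d x y \<Longrightarrow> gev d x y"
  unfolding gtv_def gev_def by (metis less_imp_le_nat less_one not_le)

lemma gtv_gev_trans: "1 \<le> d \<Longrightarrow> gtv d x y \<Longrightarrow> gev d y z \<Longrightarrow> gtv d x z"
  unfolding gtv_def gev_def by (fastforce intro: le_trans less_le_trans)

lemma gev_gtv_trans: "1 \<le> d \<Longrightarrow> gev d x y \<Longrightarrow> gtv d y z \<Longrightarrow> gtv d x z"
  unfolding gtv_def gev_def by (fastforce intro: le_trans le_less_trans)

lemma gtv_not_gev: "1 \<le> d \<Longrightarrow> gtv d x y \<Longrightarrow> \<not> gev d y x"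
  unfolding gtv_def gev_def by (auto intro!: exI[of _ 0])

lemma aff_mono: "gev d x y \<Longrightarrow> gev d (aff d A c x) (aff d A c y)"
  unfolding gev_def aff_def by (auto intro!: sum_mono mult_left_mono)

lemma interp_mono: "gev d x y \<Longrightarrow> gev d (interp d M v u x) (interp d M v u y)"
  by (induction u) (auto intro: aff_mono)

lemma interp_strict_mono:
  assumes "\<And>\<sigma> x y. gtv d x y \<Longrightarrow> gtv d (aff d (M \<sigma>) (v \<sigma>) x) (aff d (M \<sigma>) (v \<sigma>) y)"
  shows "gtv d x y \<Longrightarrow> gtv d (interp d M v u x) (interp d M v u y)"
  using assms by (induction u) auto

inductive rewrites_using :: "('a list \<times> 'a list) set \<Rightarrow> 'a list \<Rightarrow> 'a list \<Rightarrow> bool" where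
  rewrites_using_refl: "rewrites_using {} u u"
| rewrites_using_step:
    "rewrites_using U (p @ r @ q) w \<Longrightarrow> rewrites_using (insert (l, r) U) (p @ l @ q) w"

lemma rewrites_using_rule: "rewrites_using {(l, r)} (p @ l @ q) (p @ r @ q)"
  using rewrites_using_step[OF rewrites_using_refl] by blast

lemma rewrites_using_trans [trans]:
  "rewrites_using U u w \<Longrightarrow> rewrites_using V w z \<Longrightarrow> rewrites_using (U \<union> V) u z"
  by (induction rule: rewrites_using.induct) (auto intro: rewrites_using_step)

lemma rewrites_using_context:
  "rewrites_using U u w \<Longrightarrow> rewrites_using U (p @ u @ q) (p @ w @ q)"
proof (induction rule: rewrites_using.induct)
  case (rewrites_using_step U p' r q' w l)
  then show ?case
    using rewrites_using.rewrites_using_step[of U "p @ p'" r "q' @ q" "p @ w @ q" l] by simp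
qed (rule rewrites_using_refl)

lemma interp_weakly_decreasing:
  assumes "rewrites_using U u w"
    and "\<And>l r x. (l, r) \<in> U \<Longrightarrow> gev d (interp d M v l x) (interp d M v r x)"
  shows "gev d (interp d M v u x) (interp d M v w x)"
  using assms
proof (induction arbitrary: x rule: rewrites_using.induct)
  case (rewrites_using_step U p r q w l)
  have "gev d (interp d M v (p @ l @ q) x) (interp d M v (p @ r @ q) x)"
    using rewrites_using_step.prems by (simp add: interp_append interp_mono)
  moreover have "gev d (interp d M v (p @ r @ q) x) (interp d M v w x)"
    using rewrites_using_step.IH rewrites_using_step.prems by simp
  ultimately show ?case
    by (rule gev_trans)
qed (simp add: gev_refl)

lemma interp_strictly_decreasing:
  assumes "1 \<le> d"
    and mono: "\<And>\<sigma> x y. gtv d x y \<Longrightarrow> gtv d (aff d (M \<sigma>) (v \<sigma>) x) (aff d (M \<sigma>) (v \<sigma>) y)"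
    and "rewrites_using U u w"
    and weak: "\<And>l r x. (l, r) \<in> U \<Longrightarrow> gev d (interp d M v l x) (interp d M v r x)"
    and "(l\<^sub>0, r\<^sub>0) \<in> U"
    and strict: "\<And>x. gtv d (interp d M v l\<^sub>0 x) (interp d M v r\<^sub>0 x)"
  shows "gtv d (interp d M v u x) (interp d M v w x)"
  using assms(3-5)
proof (induction arbitrary: x rule: rewrites_using.induct)
  case (rewrites_using_step U p r q w l)
  show ?case
  proof (cases "(l, r) = (l\<^sub>0, r\<^sub>0)")
    case True
    have "gtv d (interp d M v p (interp d M v l (interp d M v q x)))
                (interp d M v p (interp d M v r (interp d M v q x)))"
      using True strict[of "interp d M v q x"] by (intro interp_strict_mono[OF mono]) auto
    then have "gtv d (interp d M v (p @ l @ q) x) (interp d M v (p @ r @ q) x)"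
      by (simp add: interp_append)
    moreover have "gev d (interp d M v (p @ r @ q) x) (interp d M v w x)"
      using rewrites_using_step.hyps
    proof (rule interp_weakly_decreasing)
      show "gev d (interp d M v l' x') (interp d M v r' x')" if "(l', r') \<in> U" for l' r' x'
        using that rewrites_using_step.prems(1) by blast
    qed
    ultimately show ?thesis
      using \<open>1 \<le> d\<close> gtv_gev_trans by blast
  next
    case False
    have "gev d (interp d M v (p @ l @ q) x) (interp d M v (p @ r @ q) x)"
      using rewrites_using_step.prems(1) by (simp add: interp_append interp_mono)
    moreover have "gtv d (interp d M v (p @ r @ q) x) (interp d M v w x)"
      using False rewrites_using_step.IH rewrites_using_step.prems by auto
    ultimately show ?thesis
      using \<open>1 \<le> d\<close> gev_gtv_trans by blast
  qed
qed simp

fun mat_pow :: "nat \<Rightarrow> (nat \<Rightarrow> nat \<Rightarrow> nat) \<Rightarrow> nat \<Rightarrow> nat \<Rightarrow> nat \<Rightarrow> nat" where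
  "mat_pow d A 0 i j = (if i = j then 1 else 0)"
| "mat_pow d A (Suc n) i j = (\<Sum>l<d. A i l * mat_pow d A n l j)"

fun aff_pow_offset :: "nat \<Rightarrow> (nat \<Rightarrow> nat \<Rightarrow> nat) \<Rightarrow> (nat \<Rightarrow> nat) \<Rightarrow> nat \<Rightarrow> nat \<Rightarrow> nat" where
  "aff_pow_offset d A c 0 i = 0"
| "aff_pow_offset d A c (Suc n) i = (\<Sum>l<d. A i l * aff_pow_offset d A c n l) + c i"

lemma aff_funpow_eq:
  "i < d \<Longrightarrow> (aff d A c ^^ n) x i = (\<Sum>j<d. mat_pow d A n i j * x j) + aff_pow_offset d A c n i"
proof (induction n arbitrary: i)
  case 0
  then show ?case
    by (simp add: if_distrib[where f = "\<lambda>a. a * _"] sum.delta cong: if_cong)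
next
  case (Suc n)
  have "(aff d A c ^^ Suc n) x i = (\<Sum>l<d. A i l * (aff d A c ^^ n) x l) + c i"
    using Suc.prems by (simp add: aff_def[of d A c "(aff d A c ^^ n) x"])
  also have "\<dots> = (\<Sum>l<d. A i l * ((\<Sum>j<d. mat_pow d A n l j * x j) + aff_pow_offset d A c n l)) + c i"
    using Suc.IH by simp
  also have "\<dots> = (\<Sum>l<d. \<Sum>j<d. A i l * mat_pow d A n l j * x j)
                  + (\<Sum>l<d. A i l * aff_pow_offset d A c n l) + c i"
    by (simp add: distrib_left sum.distrib sum_distrib_left mult.assoc)
  also have "(\<Sum>l<d. \<Sum>j<d. A i l * mat_pow d A n l j * x j)
           = (\<Sum>j<d. mat_pow d A (Suc n) i j * x j)"
    by (subst sum.swap) (simp add: sum_distrib_right)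
  finally show ?case
    by simp
qed

lemma aff_funpow_mono_coeffs:
  assumes "\<And>i j. i < d \<Longrightarrow> j < d \<Longrightarrow> mat_pow d A m i j \<le> mat_pow d A n i j"
    and "\<And>i. i < d \<Longrightarrow> aff_pow_offset d A c m i \<le> aff_pow_offset d A c n i"
  shows "gev d ((aff d A c ^^ n) x) ((aff d A c ^^ m) x)"
  unfolding gev_def using assms
  by (auto simp: aff_funpow_eq intro!: add_mono sum_mono mult_right_mono)

lemma nat_seq_incseq_subseq:
  fixes s :: "nat \<Rightarrow> nat"
  shows "\<exists>r. strict_mono r \<and> incseq (s \<circ> r)"
proof -
  obtain r where r: "strict_mono r" "monoseq (s \<circ> r)"
    using seq_monosub by (auto simp: o_def)
  show ?thesis
  proof (cases "incseq (s \<circ> r)")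
    case False
    then have dec: "decseq (s \<circ> r)"
      using r(2) by (simp add: monoseq_iff)
    obtain N where N: "\<And>n. (s \<circ> r) N \<le> (s \<circ> r) n"
      using ex_has_least_nat[of "\<lambda>_. True" 0 "s \<circ> r"] by blast
    have "(s \<circ> r) (n + N) = (s \<circ> r) N" for n
      using N[of "n + N"] dec by (simp add: decseq_def antisym)
    then have "incseq (s \<circ> (\<lambda>n. r (n + N)))"
      by (simp add: incseq_def)
    moreover have "strict_mono (\<lambda>n. r (n + N))"
      using r(1) by (simp add: strict_mono_def)
    ultimately show ?thesis
      by blast
  qed (use r(1) in blast)
qed

lemma dickson_subseq:
  fixes f :: "nat \<Rightarrow> 'k \<Rightarrow> nat"
  assumes "finite F"
  shows "\<exists>r. strict_mono r \<and> (\<forall>k\<in>F. incseq (\<lambda>n. f (r n) k))"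
  using assms
proof (induction rule: finite_induct)
  case empty
  show ?case
    using strict_mono_id by blast
next
  case (insert k F)
  obtain r where r: "strict_mono r" "\<forall>k\<in>F. incseq (\<lambda>n. f (r n) k)"
    using insert.IH by blast
  obtain r' where r': "strict_mono r'" "incseq ((\<lambda>n. f (r n) k) \<circ> r')"
    using nat_seq_incseq_subseq by blast
  have "incseq (\<lambda>n. f (r (r' n)) k')" if "k' \<in> F" for k'
    using r(2) that r'(1) by (simp add: incseq_def strict_mono_less_eq)
  moreover have "strict_mono (r \<circ> r')"
    using r(1) r'(1) by (rule strict_mono_o)
  ultimately show ?case
    using r'(2) by (auto simp: o_def)
qed

lemma aff_funpow_eventually_increasing:
  "\<exists>n\<^sub>0 p. 0 < p \<and> (\<forall>n\<ge>n\<^sub>0. \<forall>k x. gev d ((aff d A c ^^ (n + k * p)) x) ((aff d A c ^^ n) x))"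
proof -
  define K where "K = ({..<d} \<times> {..<d}) <+> {..<d}"
  define coeffs where
    "coeffs n = case_sum (\<lambda>(i, j). mat_pow d A n i j) (aff_pow_offset d A c n)" for n
  obtain r where r: "strict_mono r" and mono: "\<forall>k\<in>K. incseq (\<lambda>n. coeffs (r n) k)"
    using dickson_subseq[of K coeffs] by (auto simp: K_def)
  define n\<^sub>0 p where "n\<^sub>0 = r 0" and "p = r 1 - r 0"
  have "r 0 < r 1"
    using r by (simp add: strict_mono_def)
  then have p: "0 < p" "r 1 = n\<^sub>0 + p"
    by (simp_all add: n\<^sub>0_def p_def)
  have incr: "coeffs n\<^sub>0 k \<le> coeffs (n\<^sub>0 + p) k" if "k \<in> K" for k
    using incseqD[OF bspec[OF mono that], of 0 1] p(2) unfolding n\<^sub>0_def by simp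
  have base: "gev d ((aff d A c ^^ (n\<^sub>0 + p)) x) ((aff d A c ^^ n\<^sub>0) x)" for x
  proof (rule aff_funpow_mono_coeffs)
    show "mat_pow d A n\<^sub>0 i j \<le> mat_pow d A (n\<^sub>0 + p) i j" if "i < d" "j < d" for i j
      using incr[of "Inl (i, j)"] that by (simp add: K_def coeffs_def InlI)
    show "aff_pow_offset d A c n\<^sub>0 i \<le> aff_pow_offset d A c (n\<^sub>0 + p) i" if "i < d" for i
      using incr[of "Inr i"] that by (simp add: K_def coeffs_def InrI)
  qed
  have step: "gev d ((aff d A c ^^ (n + p)) x) ((aff d A c ^^ n) x)" if "n\<^sub>0 \<le> n" for n x
  proof -
    have "n + p = (n\<^sub>0 + p) + (n - n\<^sub>0)" "n = n\<^sub>0 + (n - n\<^sub>0)"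
      using that by simp_all
    then show ?thesis
      using base[of "(aff d A c ^^ (n - n\<^sub>0)) x"] by (metis comp_apply funpow_add)
  qed
  have "gev d ((aff d A c ^^ (n + k * p)) x) ((aff d A c ^^ n) x)" if "n\<^sub>0 \<le> n" for n k x
  proof (induction k)
    case (Suc k)
    have "gev d ((aff d A c ^^ (n + k * p + p)) x) ((aff d A c ^^ (n + k * p)) x)"
      using that by (intro step) simp
    then show ?case
      using Suc.IH gev_trans by (simp add: algebra_simps)
  qed (simp add: gev_refl)
  then show ?thesis
    using p(1) by blast
qed

lemma H_halves:
  "rewrites_using {([H, One, One], [One, H])} (H # replicate (2 * Suc k) One) (replicate (Suc k) One @ [H])"
proof (induction k)
  case 0
  show ?case
    using rewrites_using_rule[of "[H, One, One]" "[One, H]" "[]" "[]"] by (simp add: numeral_2_eq_2)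
next
  case (Suc k)
  have "rewrites_using {([H, One, One], [One, H])}
      (H # One # One # replicate (2 * Suc k) One) (One # H # replicate (2 * Suc k) One)"
    using rewrites_using_rule[of "[H, One, One]" "[One, H]" "[]" "replicate (2 * Suc k) One"] by simp
  also have "rewrites_using {([H, One, One], [One, H])} \<dots> (One # replicate (Suc k) One @ [H])"
    using rewrites_using_context[OF Suc.IH, of "[One]" "[]"] by simp
  finally show ?case
    by simp
qed

lemma S_moves_left:
  "rewrites_using {([One, S], [S, One])} (replicate (Suc k) One @ [S]) (S # replicate (Suc k) One)"
proof (induction k)
  case 0
  show ?case
    using rewrites_using_rule[of "[One, S]" "[S, One]" "[]" "[]"] by simp
next
  case (Suc k)
  have "rewrites_using {([One, S], [S, One])}
      (replicate (Suc k) One @ [One, S]) (replicate (Suc k) One @ [S, One])"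
    using rewrites_using_rule[of "[One, S]" "[S, One]" "replicate (Suc k) One" "[]"] by simp
  also have "rewrites_using {([One, S], [S, One])} \<dots> (S # replicate (Suc k) One @ [One])"
    using rewrites_using_context[OF Suc.IH, of "[]" "[One]"] by simp
  finally show ?case
    by (simp add: replicate_app_Cons_same)
qed

lemma T_triples:
  "rewrites_using {([One, T], [T, One, One, One])}
     (replicate (Suc k) One @ [T]) (T # replicate (3 * Suc k) One)"
proof (induction k)
  case 0
  show ?case
    using rewrites_using_rule[of "[One, T]" "[T, One, One, One]" "[]" "[]"] by (simp add: numeral_3_eq_3)
next
  case (Suc k)
  have "rewrites_using {([One, T], [T, One, One, One])}
      (replicate (Suc k) One @ [One, T]) (replicate (Suc k) One @ [T, One, One, One])"
    using rewrites_using_rule[of "[One, T]" "[T, One, One, One]" "replicate (Suc k) One" "[]"] by simp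
  also have "rewrites_using {([One, T], [T, One, One, One])}
      \<dots> (T # replicate (3 * Suc k) One @ [One, One, One])"
    using rewrites_using_context[OF Suc.IH, of "[]" "[One, One, One]"] by simp
  also have "\<dots> = T # replicate (3 * Suc (Suc k)) One"
    by (simp add: replicate_app_Cons_same numeral_3_eq_3)
  finally show ?case
    by (simp add: replicate_app_Cons_same)
qed

definition Z_word :: "nat \<Rightarrow> sym list" where
  "Z_word n = Box # H # replicate n One @ [Box]"

lemma Z_word_halve:
  assumes "2 \<le> k"
  shows "rewrites_using (set (take 4 Z)) (Z_word (2 * k)) (Z_word k)"
proof -
  obtain m where k: "k = Suc (Suc m)"
    using assms by (metis add_2_eq_Suc le_Suc_ex)
  have "rewrites_using {([H, One, One], [One, H])}
      (Z_word (2 * k)) (Box # One # One # replicate m One @ [H, Box])"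
    using rewrites_using_context[OF H_halves[of "Suc m"], of "[Box]" "[Box]"]
    by (simp add: k Z_word_def replicate_app_Cons_same)
  also have "rewrites_using {([One, One, H, Box], [One, One, S, Box])}
      \<dots> (Box # One # One # replicate m One @ [S, Box])"
    using rewrites_using_rule[of "[One, One, H, Box]" "[One, One, S, Box]" "Box # replicate m One" "[]"]
    by (simp add: replicate_app_Cons_same)
  also have "rewrites_using {([One, S], [S, One])} \<dots> (Box # S # One # One # replicate m One @ [Box])"
    using rewrites_using_context[OF S_moves_left[of "Suc m"], of "[Box]" "[Box]"]
    by (simp add: replicate_app_Cons_same)
  also have "rewrites_using {([Box, S], [Box, H])} \<dots> (Z_word k)"
    using rewrites_using_rule[of "[Box, S]" "[Box, H]" "[]" "replicate k One @ [Box]"]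
    by (simp add: k Z_word_def)
  finally show ?thesis
    by (simp add: Z_def insert_commute)
qed

lemma Z_word_odd:
  assumes "1 \<le> k"
  shows "rewrites_using (insert (hd Z) (set (drop 4 Z))) (Z_word (2 * k + 1)) (Z_word (3 * k + 2))"
proof -
  obtain m where k: "k = Suc m"
    using assms by (metis Suc_le_D One_nat_def)
  have "rewrites_using {([H, One, One], [One, H])}
      (Z_word (2 * k + 1)) (Box # One # replicate m One @ [H, One, Box])"
    using rewrites_using_context[OF H_halves[of m], of "[Box]" "[One, Box]"]
    by (simp add: k Z_word_def replicate_app_Cons_same)
  also have "rewrites_using {([H, One, Box], [T, One, One, Box])}
      \<dots> (Box # One # replicate m One @ [T, One, One, Box])"
    using rewrites_using_rule[of "[H, One, Box]" "[T, One, One, Box]" "Box # One # replicate m One" "[]"]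
    by simp
  also have "rewrites_using {([One, T], [T, One, One, One])}
      \<dots> (Box # T # replicate (3 * k) One @ [One, One, Box])"
    using rewrites_using_context[OF T_triples[of m], of "[Box]" "[One, One, Box]"]
    by (simp add: k replicate_app_Cons_same)
  also have "rewrites_using {([Box, T], [Box, H])} \<dots> (Z_word (3 * k + 2))"
    unfolding Z_word_def replicate_add
    using rewrites_using_rule[of "[Box, T]" "[Box, H]" "[]" "replicate (3 * k) One @ [One, One, Box]"]
    by (simp add: numeral_2_eq_2)
  finally show ?thesis
    by (simp add: Z_def insert_commute)
qed

lemma Z_word_cycle: "rewrites_using (set Z) (Z_word (8 * j + 6)) (Z_word (9 * j + 8))"
proof -
  have "rewrites_using (set (take 4 Z)) (Z_word (8 * j + 6)) (Z_word (4 * j + 3))"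
    using Z_word_halve[of "4 * j + 3"] by (simp add: algebra_simps)
  also have "rewrites_using (insert (hd Z) (set (drop 4 Z))) \<dots> (Z_word (6 * j + 5))"
    using Z_word_odd[of "2 * j + 1"] by (simp add: algebra_simps eval_nat_numeral)
  also have "rewrites_using (insert (hd Z) (set (drop 4 Z))) \<dots> (Z_word (9 * j + 8))"
    using Z_word_odd[of "3 * j + 2"] by (simp add: algebra_simps eval_nat_numeral)
  finally show ?thesis
    by (simp add: Z_def insert_commute)
qed

lemma interp_Z_word:
  "interp d M v (Z_word n) x
     = interp d M v [Box, H] ((aff d (M One) (v One) ^^ n) (interp d M v [Box] x))"
  by (simp add: Z_word_def interp_append interp_replicate)

theorem mainTheorem2:
  "\<not> (\<exists>(d::nat) (M :: sym \<Rightarrow> nat \<Rightarrow> nat \<Rightarrow> nat) (v :: sym \<Rightarrow> nat \<Rightarrow> nat).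
        d \<ge> 1 \<and>
        (\<forall>\<sigma> x y. gtv d x y \<longrightarrow> gtv d (aff d (M \<sigma>) (v \<sigma>) x) (aff d (M \<sigma>) (v \<sigma>) y)) \<and>
        (\<exists>\<rho>\<in>set Z. (\<forall>x. gtv d (interp d M v (fst \<rho>) x) (interp d M v (snd \<rho>) x)) \<and>
           (\<forall>\<rho>'\<in>set Z. \<rho>' \<noteq> \<rho> \<longrightarrow>
              (\<forall>x. gev d (interp d M v (fst \<rho>') x) (interp d M v (snd \<rho>') x)))))"
proof (intro notI, elim exE conjE bexE)
  fix d M v \<rho>
  assume d: "d \<ge> 1"
    and mono: "\<forall>\<sigma> x y. gtv d x y \<longrightarrow> gtv d (aff d (M \<sigma>) (v \<sigma>) x) (aff d (M \<sigma>) (v \<sigma>) y)"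
    and "\<rho> \<in> set Z" and strict: "\<forall>x. gtv d (interp d M v (fst \<rho>) x) (interp d M v (snd \<rho>) x)"
    and weak: "\<forall>\<rho>'\<in>set Z. \<rho>' \<noteq> \<rho> \<longrightarrow> (\<forall>x. gev d (interp d M v (fst \<rho>') x) (interp d M v (snd \<rho>') x))"
  have weak_rules: "gev d (interp d M v l x) (interp d M v r x)" if "(l, r) \<in> set Z" for l r x
    using that strict weak gtv_imp_gev by (cases "(l, r) = \<rho>") auto
  obtain n\<^sub>0 p where "0 < p"
    and periodic: "\<forall>n\<ge>n\<^sub>0. \<forall>k x. gev d ((aff d (M One) (v One) ^^ (n + k * p)) x) ((aff d (M One) (v One) ^^ n) x)"
    using aff_funpow_eventually_increasing by blast
  define j where "j = (n\<^sub>0 + 2) * p - 2"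
  have "n\<^sub>0 + 2 \<le> (n\<^sub>0 + 2) * p"
    using \<open>0 < p\<close> by (cases p) auto
  then have j: "n\<^sub>0 \<le> 8 * j + 6" "9 * j + 8 = (8 * j + 6) + (n\<^sub>0 + 2) * p"
    by (simp_all add: j_def)
  have "gev d (interp d M v (Z_word (9 * j + 8)) x) (interp d M v (Z_word (8 * j + 6)) x)" for x
    unfolding interp_Z_word j(2) by (intro interp_mono periodic[rule_format] j(1))
  moreover have "gtv d (interp d M v (Z_word (8 * j + 6)) x) (interp d M v (Z_word (9 * j + 8)) x)" for x
    using \<open>\<rho> \<in> set Z\<close> strict
    by (intro interp_strictly_decreasing[OF d mono[rule_format] Z_word_cycle weak_rules]) auto
  ultimately show False
    using gtv_not_gev[OF d] by blast
qed

end
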